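(* Let $1\le\ell\le k-1$ be integers with $k-\ell$ not dividing $k$, and let $m\ge\lceil k/(k-\ell)\rceil$ be an integer. Then the $k$-uniform $\ell$-cycle $C$ with $k^2\ell+m$ edges is $k$-partite. Moreover, if $m=\lceil k/(k-\ell)\rceil$, then $\gcd(C)=1$.
   Context: A ($k$-uniform) $\ell$-cycle is a $k$-graph whose vertices can be cyclically ordered so that every edge consists of $k$ cyclically consecutive vertices and consecutive edges intersect in exactly $\ell$ vertices; with $e$ edges it has $e(k-\ell)$ vertices. A $k$-graph is $k$-partite if its vertex set can be partitioned into $k$ parts so that every edge has exactly one vertex in each part. A proper $t$-colouring of a $k$-graph $F$ assigns to each vertex one of the colours $1,\dots,t$ so that no edge contains two vertices of the same colour; $\chi(F)$ is the least $t$ admitting a proper $t$-colouring. $\mathcal{D}(F)\subseteq\mathbb{N}_0$ is the set of integers $\big||\phi^{-1}(1)|-|\phi^{-1}(2)|\big|$ over all proper $\chi(F)$-colourings $\phi$ of $F$, and $\gcd(F)$ is the greatest common divisor of the elements of $\mathcal{D}(F)\setminus\{0\}$, with $\gcd(F)=\infty$ if $\mathcal{D}(F)=\{0\}$. *)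

theory Defs
  imports Main "HOL-Library.Extended_Nat"
begin

definition cycle_vertices :: "nat \<Rightarrow> nat \<Rightarrow> nat \<Rightarrow> nat set" where
  "cycle_vertices k l e = {..<e * (k - l)}"

definition cycle_edges :: "nat \<Rightarrow> nat \<Rightarrow> nat \<Rightarrow> nat set set" where
  "cycle_edges k l e =
     {{(i * (k - l) + j) mod (e * (k - l)) | j. j < k} | i. i < e}"

definition k_partite :: "'a set \<Rightarrow> 'a set set \<Rightarrow> nat \<Rightarrow> bool" where
  "k_partite V E k \<longleftrightarrow>
     (\<exists>f. f ` V \<subseteq> {..<k} \<and> (\<forall>X\<in>E. \<forall>p<k. card {v\<in>X. f v = p} = 1))"

definition proper_colouring :: "'a set \<Rightarrow> 'a set set \<Rightarrow> nat \<Rightarrow> ('a \<Rightarrow> nat) \<Rightarrow> bool" where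
  "proper_colouring V E t \<phi> \<longleftrightarrow>
     \<phi> ` V \<subseteq> {1..t} \<and> (\<forall>X\<in>E. \<forall>u\<in>X. \<forall>v\<in>X. u \<noteq> v \<longrightarrow> \<phi> u \<noteq> \<phi> v)"

definition chromatic_number :: "'a set \<Rightarrow> 'a set set \<Rightarrow> nat" where
  "chromatic_number V E = (LEAST t. \<exists>\<phi>. proper_colouring V E t \<phi>)"

definition colour_diffs :: "'a set \<Rightarrow> 'a set set \<Rightarrow> nat set" where
  "colour_diffs V E =
     {nat \<bar>int (card {v\<in>V. \<phi> v = 1}) - int (card {v\<in>V. \<phi> v = 2})\<bar> | \<phi>.
        proper_colouring V E (chromatic_number V E) \<phi>}"

definition hgcd :: "'a set \<Rightarrow> 'a set set \<Rightarrow> enat" where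
  "hgcd V E = (if colour_diffs V E - {0} = {} then \<infinity>
               else enat (Gcd (colour_diffs V E - {0})))"

end

theory Submission
  imports Defs "HOL-Combinatorics.Transposition"
begin

(* Write d = k - l and k = q d + r, where 0 < r < d because d does not divide k, so that
   ceil (k / d) = q + 1. Number the n = e d vertices of the cycle by the naturals modulo n, so that
   edge i is the window [i d, i d + k). A map into {0, ..., k - 1} that is n-periodic and injective
   on every window is then a proper k-colouring, i.e. a k-partition.

   A set meeting every window exactly once is built from blocks of q or q + 1 consecutive
   windows: block t gets the single point (S (t + 1) - 1) d + o t, where S is the partial sum of
   the block lengths and the offset o t is < r for long blocks and >= r for short ones. Give s
   disjoint such sets the colours 0, ..., s - 1. Every window then contains exactly k - s free
   vertices, consecutive among all free vertices, so colouring the free vertices by their rank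
   modulo k - s is injective on windows, and it is periodic when k - s divides their number.

   For e >= k^2 l a single such set, with a suitable number N of points per period (k - 1 dividing
   n - N), gives the k-partition. For e = k^2 l + q + 1 one has n = k T + (d - r) with
   T = k l d + 1. A set of size T + 1, together with a disjoint set of size T + d - r - 1 when
   d - r >= 2, leaves k - 1 (resp. k - 2) colour classes of size T, so two colour classes differ
   in size by one and the gcd is 1. *)

section \<open>Window colourings of the cycle\<close>

lemma hgcd_eq_1_if_card_diff_1:
  assumes "proper_colouring V E (chromatic_number V E) \<phi>"
    and "card {v \<in> V. \<phi> v = 1} = Suc (card {v \<in> V. \<phi> v = 2})"
  shows "hgcd V E = 1"
proof -
  have "1 \<in> colour_diffs V E"
    unfolding colour_diffs_def using assms by (intro CollectI exI[of _ \<phi>]) auto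
  moreover from this have "Gcd (colour_diffs V E - {0}) = 1"
    by (metis DiffI Gcd_dvd nat_dvd_1_iff_1 singletonD zero_neq_one)
  ultimately show ?thesis unfolding hgcd_def by (auto simp: one_enat_def)
qed

lemma cycle_edges_eq_windows:
  "cycle_edges k l e = {(\<lambda>j. (i*(k-l) + j) mod (e*(k-l))) ` {..<k} | i. i < e}"
  unfolding cycle_edges_def by (auto simp: image_def)

lemma periodic_mod:
  fixes f :: "nat \<Rightarrow> 'a"
  assumes "\<And>v. f (v + n) = f v"
  shows "f (x mod n) = f x"
proof -
  have "f (y + j*n) = f y" for y j
    by (induction j arbitrary: y) (simp_all add: assms add.assoc[symmetric])
  from this[of "x mod n" "x div n"] show ?thesis by simp
qed

locale window_colouring =
  fixes k l e :: nat and F :: "nat \<Rightarrow> nat"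
  assumes k_le: "k \<le> e*(k-l)" and k_pos: "0 < k"
    and periodic: "\<And>v. F (v + e*(k-l)) = F v"
    and less_k: "\<And>v. F v < k"
    and inj_on_window: "\<And>i. i < e \<Longrightarrow> inj_on F {i*(k-l)..<i*(k-l) + k}"
begin

lemma bij_betw_window:
  assumes "i < e"
  shows "bij_betw (\<lambda>j. F (i*(k-l) + j)) {..<k} {..<k}"
proof -
  have inj: "inj_on (\<lambda>j. F (i*(k-l) + j)) {..<k}"
  proof (rule inj_onI)
    fix x y assume "x \<in> {..<k}" "y \<in> {..<k}" "F (i*(k-l) + x) = F (i*(k-l) + y)"
    then show "x = y"
      using inj_onD[OF inj_on_window[OF assms], of "i*(k-l) + x" "i*(k-l) + y"] by simp
  qed
  then have "(\<lambda>j. F (i*(k-l) + j)) ` {..<k} = {..<k}"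
    using less_k by (intro card_subset_eq) (auto simp: card_image)
  with inj show ?thesis unfolding bij_betw_def by simp
qed

lemma card_edge_colour_class:
  assumes "X \<in> cycle_edges k l e" "p < k"
  shows "card {v \<in> X. F v = p} = 1"
proof -
  obtain i where i: "i < e" and X: "X = (\<lambda>j. (i*(k-l) + j) mod (e*(k-l))) ` {..<k}"
    using assms(1) unfolding cycle_edges_eq_windows by blast
  have F_mod: "F ((i*(k-l) + j) mod (e*(k-l))) = F (i*(k-l) + j)" for j
    using periodic_mod[of F, OF periodic] .
  note bij = bij_betw_window[OF i]
  have "p \<in> (\<lambda>j. F (i*(k-l) + j)) ` {..<k}" using bij assms(2) unfolding bij_betw_def by simp
  then obtain j where j: "j < k" "F (i*(k-l) + j) = p" by auto
  have "{v \<in> X. F v = p} = {(i*(k-l) + j) mod (e*(k-l))}"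
  proof
    show "{(i*(k-l) + j) mod (e*(k-l))} \<subseteq> {v \<in> X. F v = p}" using X j F_mod by auto
    show "{v \<in> X. F v = p} \<subseteq> {(i*(k-l) + j) mod (e*(k-l))}"
    proof
      fix v assume "v \<in> {v \<in> X. F v = p}"
      then obtain j' where j': "j' < k" "v = (i*(k-l) + j') mod (e*(k-l))" "F (i*(k-l) + j') = p"
        using X F_mod by auto
      then have "j' = j" using inj_onD[OF bij_betw_imp_inj_on[OF bij], of j' j] j by simp
      then show "v \<in> {(i*(k-l) + j) mod (e*(k-l))}" using j' by simp
    qed
  qed
  then show ?thesis by simp
qed

lemma k_partite: "k_partite (cycle_vertices k l e) (cycle_edges k l e) k"
  unfolding k_partite_def using less_k card_edge_colour_class by blast

lemma proper_colouring_comp: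
  assumes "inj_on h {..<k}" "h ` {..<k} \<subseteq> {1..k}"
  shows "proper_colouring (cycle_vertices k l e) (cycle_edges k l e) k (\<lambda>v. h (F v))"
  unfolding proper_colouring_def
proof (intro conjI ballI impI)
  show "(\<lambda>v. h (F v)) ` cycle_vertices k l e \<subseteq> {1..k}" using assms(2) less_k by auto
next
  fix X u v assume X: "X \<in> cycle_edges k l e" and uv: "u \<in> X" "v \<in> X" "u \<noteq> v"
  obtain x where x: "{w \<in> X. F w = F u} = {x}"
    using card_edge_colour_class[OF X less_k] by (rule card_1_singletonE)
  have "F u \<noteq> F v"
  proof
    assume "F u = F v"
    then have "u = x" "v = x" using x uv by (auto simp: set_eq_iff)
    with uv show False by simp
  qed
  then show "h (F u) \<noteq> h (F v)" using inj_onD[OF assms(1), of "F u" "F v"] less_k by auto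
qed

lemma chromatic_number_eq: "chromatic_number (cycle_vertices k l e) (cycle_edges k l e) = k"
  unfolding chromatic_number_def
proof (rule Least_equality)
  have "proper_colouring (cycle_vertices k l e) (cycle_edges k l e) k (\<lambda>v. Suc (F v))"
    by (rule proper_colouring_comp) auto
  then show "\<exists>\<phi>. proper_colouring (cycle_vertices k l e) (cycle_edges k l e) k \<phi>" by blast
next
  fix t assume "\<exists>\<phi>. proper_colouring (cycle_vertices k l e) (cycle_edges k l e) t \<phi>"
  then obtain \<phi> where \<phi>: "proper_colouring (cycle_vertices k l e) (cycle_edges k l e) t \<phi>" ..
  have e_pos: "0 < e" using k_le k_pos by (cases e) auto
  let ?w = "\<lambda>j. j mod (e*(k-l))"
  let ?X = "?w ` {..<k}"
  have X: "?X \<in> cycle_edges k l e"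
    unfolding cycle_edges_eq_windows using e_pos by (auto intro!: exI[of _ 0])
  have "inj_on (F \<circ> ?w) {..<k}"
    using bij_betw_imp_inj_on[OF bij_betw_window[OF e_pos]] periodic_mod[of F, OF periodic]
    by (simp add: inj_on_def)
  then have "card ?X = k" by (simp add: card_image inj_on_imageI2)
  moreover have "inj_on \<phi> ?X"
  proof (rule inj_onI)
    fix u v assume "u \<in> ?X" "v \<in> ?X" "\<phi> u = \<phi> v"
    then show "u = v" using \<phi> X unfolding proper_colouring_def by metis
  qed
  ultimately have "card (\<phi> ` ?X) = k" by (simp add: card_image)
  moreover have "\<phi> ` ?X \<subseteq> {1..t}"
    using \<phi> k_le unfolding proper_colouring_def cycle_vertices_def by auto
  ultimately show "k \<le> t" using card_mono[of "{1..t}" "\<phi> ` ?X"] by simp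
qed

lemma hgcd_eq_1:
  assumes "0 < b" "b < k"
    and "card {v \<in> {..<e*(k-l)}. F v = 0} = Suc (card {v \<in> {..<e*(k-l)}. F v = b})"
  shows "hgcd (cycle_vertices k l e) (cycle_edges k l e) = 1"
proof (rule hgcd_eq_1_if_card_diff_1)
  let ?h = "Suc \<circ> Transposition.transpose 1 b"
  have "?h ` {..<k} = Suc ` Transposition.transpose 1 b ` {..<k}" by (simp add: image_comp)
  also have "\<dots> = Suc ` {..<k}" using assms(1,2) by simp
  finally have "?h ` {..<k} \<subseteq> {1..k}" by auto
  moreover have "inj_on ?h {..<k}" by (simp add: comp_inj_on)
  ultimately show "proper_colouring (cycle_vertices k l e) (cycle_edges k l e)
      (chromatic_number (cycle_vertices k l e) (cycle_edges k l e)) (\<lambda>v. ?h (F v))"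
    unfolding chromatic_number_eq by (intro proper_colouring_comp)
  have "?h x = 1 \<longleftrightarrow> x = 0" "?h x = 2 \<longleftrightarrow> x = b" for x
    using assms(1) by (auto simp: transpose_eq_iff)
  then show "card {v \<in> cycle_vertices k l e. ?h (F v) = 1}
      = Suc (card {v \<in> cycle_vertices k l e. ?h (F v) = 2})"
    using assms(3) unfolding cycle_vertices_def by simp
qed

end

section \<open>Completing a partial colouring by ranks\<close>

lemma card_residue_class_below:
  fixes m c j :: nat
  assumes "c < m"
  shows "card {x \<in> {..<j*m}. x mod m = c} = j"
proof (induction j)
  case (Suc j)
  have "{x \<in> {..<Suc j*m}. x mod m = c} = insert (j*m + c) {x \<in> {..<j*m}. x mod m = c}"
  proof
    show "{x \<in> {..<Suc j*m}. x mod m = c} \<subseteq> insert (j*m + c) {x \<in> {..<j*m}. x mod m = c}"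
    proof
      fix x assume x: "x \<in> {x \<in> {..<Suc j*m}. x mod m = c}"
      show "x \<in> insert (j*m + c) {x \<in> {..<j*m}. x mod m = c}"
      proof (cases "x < j*m")
        case False
        define y where "y = x - j*m"
        have "x = j*m + y" "y < m" using False x unfolding y_def by auto
        then show ?thesis using x by simp
      qed (use x in simp)
    qed
  qed (use assms in auto)
  then show ?case using Suc by simp
qed simp

locale partial_window_colouring =
  fixes n s k d :: nat and special :: "nat \<Rightarrow> bool" and label :: "nat \<Rightarrow> nat"
  assumes s_less: "s < k"
    and special_periodic: "\<And>v. special (v + n) = special v"
    and label_periodic: "\<And>v. special v \<Longrightarrow> label (v + n) = label v"
    and label_less: "\<And>v. special v \<Longrightarrow> label v < s"
    and card_window_label: "\<And>i a. a < s \<Longrightarrow> card {v \<in> {i*d..<i*d + k}. special v \<and> label v = a} = 1"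
    and dvd_free: "(k - s) dvd (n - card {v \<in> {..<n}. special v})"
begin

definition free_rank :: "nat \<Rightarrow> nat" where
  "free_rank v = card {u \<in> {..<v}. \<not> special u}"

definition colouring :: "nat \<Rightarrow> nat" where
  "colouring v = (if special v then label v else s + free_rank v mod (k - s))"

lemma free_rank_add:
  assumes "u \<le> v"
  shows "free_rank v = free_rank u + card {w \<in> {u..<v}. \<not> special w}"
proof -
  have "{w \<in> {..<v}. \<not> special w} = {w \<in> {..<u}. \<not> special w} \<union> {w \<in> {u..<v}. \<not> special w}"
    using assms by auto
  moreover have "card ({w \<in> {..<u}. \<not> special w} \<union> {w \<in> {u..<v}. \<not> special w})
      = card {w \<in> {..<u}. \<not> special w} + card {w \<in> {u..<v}. \<not> special w}"
    by (rule card_Un_disjoint) auto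
  ultimately show ?thesis unfolding free_rank_def by simp
qed

lemma free_rank_less:
  assumes "u < v" "\<not> special u"
  shows "free_rank u < free_rank v"
proof -
  have "u \<in> {w \<in> {u..<v}. \<not> special w}" using assms by simp
  then have "0 < card {w \<in> {u..<v}. \<not> special w}" by (auto simp: card_gt_0_iff)
  then show ?thesis using free_rank_add[of u v] assms by simp
qed

lemma free_rank_period: "free_rank n = n - card {v \<in> {..<n}. special v}"
proof -
  have "{u \<in> {..<n}. \<not> special u} = {..<n} - {v \<in> {..<n}. special v}" by auto
  moreover have "card ({..<n} - {v \<in> {..<n}. special v}) = n - card {v \<in> {..<n}. special v}"
    by (subst card_Diff_subset) auto
  ultimately show ?thesis unfolding free_rank_def by simp
qed

lemma free_rank_add_period: "free_rank (v + n) = free_rank v + free_rank n"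
proof -
  have "{w \<in> {n..<v+n}. \<not> special w} = (\<lambda>u. u + n) ` {u \<in> {..<v}. \<not> special u}"
  proof safe
    fix w assume "w \<in> {n..<v+n}" "\<not> special w"
    then show "w \<in> (\<lambda>u. u + n) ` {u \<in> {..<v}. \<not> special u}"
      using special_periodic[of "w - n"] by (intro image_eqI[of _ _ "w - n"]) auto
  qed (auto simp: special_periodic)
  then have "card {w \<in> {n..<v+n}. \<not> special w} = free_rank v"
    unfolding free_rank_def by (simp add: card_image)
  then show ?thesis using free_rank_add[of n "v + n"] by simp
qed

lemma colouring_periodic: "colouring (v + n) = colouring v"
proof -
  have "(free_rank v + free_rank n) mod (k - s) = free_rank v mod (k - s)"
    using dvd_free free_rank_period by auto
  then show ?thesis
    by (simp add: colouring_def special_periodic label_periodic free_rank_add_period)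
qed

lemma colouring_less: "colouring v < k"
proof -
  have "free_rank v mod (k - s) < k - s" using s_less by simp
  then show ?thesis using label_less[of v] s_less by (auto simp: colouring_def less_diff_conv)
qed

lemma card_window_special: "card {w \<in> {i*d..<i*d + k}. special w} = s"
proof -
  have "{w \<in> {i*d..<i*d + k}. special w}
      = (\<Union>a<s. {w \<in> {i*d..<i*d + k}. special w \<and> label w = a})"
    using label_less by auto
  also have "card \<dots> = (\<Sum>a<s. card {w \<in> {i*d..<i*d + k}. special w \<and> label w = a})"
    by (rule card_UN_disjoint) auto
  also have "\<dots> = (\<Sum>a<s. 1)" by (intro sum.cong refl card_window_label) simp
  finally show ?thesis by simp
qed

lemma card_window_free: "card {w \<in> {i*d..<i*d + k}. \<not> special w} = k - s"
proof -
  have "{w \<in> {i*d..<i*d + k}. \<not> special w} = {i*d..<i*d + k} - {w \<in> {i*d..<i*d + k}. special w}"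
    by auto
  also have "card \<dots> = k - card {w \<in> {i*d..<i*d + k}. special w}"
    by (subst card_Diff_subset) auto
  finally show ?thesis using card_window_special[of i] by simp
qed

text \<open>The free vertices of a window are consecutive among all free vertices, and there are
  only \<open>k - s\<close> of them, so their ranks are distinct modulo \<open>k - s\<close>.\<close>
lemma free_rank_mod_ne:
  assumes "u \<in> {i*d..<i*d + k}" "v \<in> {i*d..<i*d + k}" "u < v" "\<not> special u" "\<not> special v"
  shows "free_rank u mod (k - s) \<noteq> free_rank v mod (k - s)"
proof
  assume eq: "free_rank u mod (k - s) = free_rank v mod (k - s)"
  define D where "D = card {w \<in> {u..<v}. \<not> special w}"
  have "free_rank v = free_rank u + D" unfolding D_def using assms by (intro free_rank_add) simp
  with eq have "(k - s) dvd D"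
    using mod_eq_dvd_iff_nat[of "free_rank u" "free_rank u + D" "k - s"] by simp
  moreover have "0 < D" using free_rank_less[of u v] free_rank_add[of u v] assms unfolding D_def by simp
  moreover have "D < k - s"
  proof -
    have "{w \<in> {u..<v}. \<not> special w} \<subseteq> {w \<in> {i*d..<i*d + k}. \<not> special w} - {v}"
      using assms by auto
    then have "D \<le> card ({w \<in> {i*d..<i*d + k}. \<not> special w} - {v})"
      unfolding D_def by (intro card_mono) auto
    also have "\<dots> = card {w \<in> {i*d..<i*d + k}. \<not> special w} - 1"
      by (rule card_Diff_singleton) (use assms in simp)
    finally show ?thesis using \<open>0 < D\<close> card_window_free[of i] by linarith
  qed
  ultimately show False by (simp add: nat_dvd_not_less)
qed

lemma inj_on_window_colouring: "inj_on colouring {i*d..<i*d + k}"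
proof -
  have ne: "colouring u \<noteq> colouring v"
    if uv: "u \<in> {i*d..<i*d + k}" "v \<in> {i*d..<i*d + k}" "u < v" for u v
  proof (cases "special u"; cases "special v")
    assume su: "special u" and sv: "special v"
    obtain x where x: "{w \<in> {i*d..<i*d + k}. special w \<and> label w = label u} = {x}"
      using card_window_label[OF label_less[OF su]] by (rule card_1_singletonE)
    show ?thesis
    proof
      assume "colouring u = colouring v"
      then have "label v = label u" using su sv by (simp add: colouring_def)
      then have "u \<in> {x}" "v \<in> {x}" using uv su sv unfolding x[symmetric] by simp_all
      with \<open>u < v\<close> show False by simp
    qed
  next
    assume "special u" "\<not> special v"
    then show ?thesis using label_less[of u] by (simp add: colouring_def)
  next
    assume "\<not> special u" "special v"
    then show ?thesis using label_less[of v] by (simp add: colouring_def)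
  next
    assume "\<not> special u" "\<not> special v"
    then show ?thesis using free_rank_mod_ne[OF uv] by (simp add: colouring_def)
  qed
  show ?thesis
  proof (rule inj_onI)
    fix u v assume "u \<in> {i*d..<i*d + k}" "v \<in> {i*d..<i*d + k}" "colouring u = colouring v"
    then show "u = v" using ne[of u v] ne[of v u] by (metis linorder_neqE_nat)
  qed
qed

lemma card_colour_special:
  "a < s \<Longrightarrow> card {v \<in> {..<n}. colouring v = a} = card {v \<in> {..<n}. special v \<and> label v = a}"
  unfolding colouring_def by (rule arg_cong[where f = card]) auto

lemma bij_betw_free_rank:
  "bij_betw free_rank {v \<in> {..<n}. \<not> special v} {..<free_rank n}"
proof -
  let ?A = "{v \<in> {..<n}. \<not> special v}"
  have inj: "inj_on free_rank ?A"
    by (intro inj_onI) (metis free_rank_less linorder_neqE_nat mem_Collect_eq less_irrefl)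
  have "free_rank ` ?A \<subseteq> {..<free_rank n}" using free_rank_less by auto
  moreover have "card (free_rank ` ?A) = free_rank n"
    using card_image[OF inj] unfolding free_rank_def by simp
  ultimately have "free_rank ` ?A = {..<free_rank n}" by (intro card_subset_eq) auto
  with inj show ?thesis unfolding bij_betw_def by simp
qed

lemma card_colour_free:
  assumes "c < k - s"
  shows "card {v \<in> {..<n}. colouring v = s + c} = (n - card {v \<in> {..<n}. special v}) div (k - s)"
proof -
  have "{v \<in> {..<n}. colouring v = s + c} = {v \<in> {v \<in> {..<n}. \<not> special v}. free_rank v mod (k - s) = c}"
    by (auto simp: colouring_def dest: label_less)
  also have "card \<dots> = card {x \<in> {..<free_rank n}. x mod (k - s) = c}"
    using bij_betw_free_rank by (intro bij_betw_same_card[of free_rank]) (auto simp: bij_betw_def inj_on_def)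
  also have "\<dots> = free_rank n div (k - s)"
    using dvd_free free_rank_period card_residue_class_below[OF assms]
    by (metis dvd_mult_div_cancel mult.commute)
  finally show ?thesis by (simp add: free_rank_period)
qed

lemma window_colouring:
  assumes "n = e*(k-l)" "d = k - l" "k \<le> n"
  shows "window_colouring k l e colouring"
  using assms s_less colouring_periodic colouring_less inj_on_window_colouring
  by unfold_locales auto

end

section \<open>Transversals of the windows\<close>

lemma window_mem_iff_off_less:
  fixes b d i q r x :: nat
  assumes "x < r" "r < d"
  shows "(i*d \<le> b*d + x \<and> b*d + x < i*d + (q*d + r)) \<longleftrightarrow> (i \<le> b \<and> b \<le> i + q)"
proof
  assume h: "i*d \<le> b*d + x \<and> b*d + x < i*d + (q*d + r)"
  have "i \<le> b"
  proof (rule ccontr)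
    assume "\<not> i \<le> b"
    then have "Suc b * d \<le> i * d" by (intro mult_le_mono1) simp
    then show False using h assms by simp
  qed
  moreover have "b \<le> i + q"
  proof (rule ccontr)
    assume "\<not> b \<le> i + q"
    then have "Suc (i + q) * d \<le> b * d" by (intro mult_le_mono1) simp
    then show False using h assms by (simp add: algebra_simps)
  qed
  ultimately show "i \<le> b \<and> b \<le> i + q" ..
next
  assume h: "i \<le> b \<and> b \<le> i + q"
  then have "i*d \<le> b*d" "b*d \<le> i*d + q*d"
    using mult_le_mono1[of b "i + q" d] by (simp_all add: add_mult_distrib)
  then show "i*d \<le> b*d + x \<and> b*d + x < i*d + (q*d + r)" using assms by linarith
qed

lemma window_mem_iff_off_ge:
  fixes b d i q r x :: nat
  assumes "r \<le> x" "x < d"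
  shows "(i*d \<le> b*d + x \<and> b*d + x < i*d + (q*d + r)) \<longleftrightarrow> (i \<le> b \<and> b < i + q)"
proof
  assume h: "i*d \<le> b*d + x \<and> b*d + x < i*d + (q*d + r)"
  have "i \<le> b"
  proof (rule ccontr)
    assume "\<not> i \<le> b"
    then have "Suc b * d \<le> i * d" by (intro mult_le_mono1) simp
    then show False using h assms by simp
  qed
  moreover have "b < i + q"
  proof (rule ccontr)
    assume "\<not> b < i + q"
    then have "(i + q) * d \<le> b * d" by (intro mult_le_mono1) simp
    then show False using h assms by (simp add: algebra_simps)
  qed
  ultimately show "i \<le> b \<and> b < i + q" ..
next
  assume h: "i \<le> b \<and> b < i + q"
  then have "i*d \<le> b*d" "b*d + d \<le> i*d + q*d"
    using mult_le_mono1[of "Suc b" "i + q" d] by (simp_all add: add_mult_distrib)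
  then show "i*d \<le> b*d + x \<and> b*d + x < i*d + (q*d + r)" using assms by linarith
qed

definition transversal_point :: "nat \<Rightarrow> (nat \<Rightarrow> nat) \<Rightarrow> (nat \<Rightarrow> nat) \<Rightarrow> nat \<Rightarrow> nat" where
  "transversal_point d len off t = ((\<Sum>u<Suc t. len u) - 1) * d + off t"

locale window_transversal =
  fixes k d q r :: nat and len off :: "nat \<Rightarrow> nat"
  assumes k_eq: "k = q*d + r" and r_pos: "0 < r" and r_less: "r < d" and q_pos: "0 < q"
    and len_cases: "\<And>t. len t = q \<or> len t = Suc q"
    and off_long: "\<And>t. len t = Suc q \<Longrightarrow> off t < r"
    and off_short: "\<And>t. len t = q \<Longrightarrow> r \<le> off t \<and> off t < d"
begin

abbreviation first_window :: "nat \<Rightarrow> nat" where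
  "first_window t \<equiv> \<Sum>u<t. len u"

abbreviation point :: "nat \<Rightarrow> nat" where
  "point \<equiv> transversal_point d len off"

lemma len_pos: "0 < len t"
  using len_cases[of t] q_pos by auto

lemma off_less: "off t < d"
  using len_cases[of t] off_long[of t] off_short[of t] r_less by auto

lemma point_less_first_window_Suc: "point t < first_window (Suc t) * d"
proof -
  have "first_window (Suc t) * d = (first_window (Suc t) - 1) * d + d"
    using len_pos[of t] by (cases "first_window (Suc t)") auto
  then show ?thesis unfolding transversal_point_def using off_less[of t] by simp
qed

lemma point_in_window_iff:
  "(i*d \<le> point t \<and> point t < i*d + k) \<longleftrightarrow> (first_window t \<le> i \<and> i < first_window (Suc t))"
proof (cases "len t = Suc q")
  case True
  have "point t = (first_window t + q) * d + off t"
    unfolding transversal_point_def using True by simp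
  then show ?thesis
    using window_mem_iff_off_less[OF off_long[OF True] r_less, of i "first_window t + q" q] k_eq True
    by auto
next
  case False
  then have short: "len t = q" using len_cases[of t] by auto
  have "point t = (first_window t + q - 1) * d + off t"
    unfolding transversal_point_def using short by simp
  then show ?thesis
    using window_mem_iff_off_ge[of r "off t" d i "first_window t + q - 1" q] off_short[OF short]
      k_eq short q_pos
    by auto
qed

lemma strict_mono_point: "strict_mono point"
  unfolding strict_mono_Suc_iff
proof
  fix t
  have "first_window (Suc t) \<le> first_window (Suc (Suc t)) - 1"
    using len_pos[of "Suc t"] by simp
  then have "first_window (Suc t) * d \<le> (first_window (Suc (Suc t)) - 1) * d"
    by (rule mult_le_mono1)
  then have "first_window (Suc t) * d \<le> point (Suc t)"
    unfolding transversal_point_def by linarith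
  then show "point t < point (Suc t)" using point_less_first_window_Suc[of t] by simp
qed

lemma ex1_first_window: "\<exists>!t. first_window t \<le> i \<and> i < first_window (Suc t)"
proof -
  have mono: "first_window t \<le> first_window t'" if "t \<le> t'" for t t'
    using that by (intro sum_mono2) auto
  have "i < first_window (Suc i)"
  proof -
    have "Suc i \<le> first_window (Suc i)"
      using sum_mono[of "{..<Suc i}" "\<lambda>_. 1" len] len_pos by (simp add: Suc_le_eq)
    then show ?thesis by simp
  qed
  then have ex: "\<exists>t. i < first_window (Suc t)" ..
  define t0 where "t0 = (LEAST t. i < first_window (Suc t))"
  have t0_above: "i < first_window (Suc t0)" unfolding t0_def using ex by (rule LeastI_ex)
  have t0_below: "first_window t0 \<le> i"
  proof (cases t0)
    case (Suc t')
    then have "\<not> i < first_window (Suc t')" unfolding t0_def by (metis lessI not_less_Least t0_def)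
    then show ?thesis using Suc by simp
  qed simp
  show ?thesis
  proof (rule ex1I[of _ t0])
    fix t assume t: "first_window t \<le> i \<and> i < first_window (Suc t)"
    show "t = t0"
    proof (rule ccontr)
      assume "t \<noteq> t0"
      then consider "Suc t \<le> t0" | "Suc t0 \<le> t" by linarith
      then show False
        using t t0_above t0_below mono by cases (meson leD order_le_less_trans order_less_le_trans)+
    qed
  qed (use t0_above t0_below in simp)
qed

lemma card_window_points: "card {v \<in> {i*d..<i*d + k}. v \<in> range point} = 1"
proof -
  obtain t0 where t0: "first_window t0 \<le> i \<and> i < first_window (Suc t0)"
    and unique: "\<And>t. first_window t \<le> i \<and> i < first_window (Suc t) \<Longrightarrow> t = t0"
    using ex1_first_window[of i] by blast
  have "{v \<in> {i*d..<i*d + k}. v \<in> range point} = {point t0}"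
  proof safe
    fix v t assume "point t \<in> {i*d..<i*d + k}"
    then show "point t = point t0" using point_in_window_iff[of i t] unique by simp
  next
    show "point t0 \<in> {i*d..<i*d + k}" using point_in_window_iff[of i t0] t0 by simp
  qed auto
  then show ?thesis by simp
qed

end

locale periodic_transversal = window_transversal +
  fixes N e :: nat
  assumes len_periodic: "\<And>t. len (t + N) = len t"
    and off_periodic: "\<And>t. off (t + N) = off t"
    and first_window_period: "first_window N = e"
begin

lemma first_window_add_period: "first_window (t + N) = first_window t + e"
proof (induction t)
  case 0
  then show ?case using first_window_period by simp
next
  case (Suc t)
  then show ?case using len_periodic[of t] by simp
qed

lemma first_window_add_periods: "first_window (a*N + x) = a*e + first_window x"
proof (induction a)
  case (Suc a)
  have "first_window (Suc a * N + x) = first_window ((a*N + x) + N)" by (simp add: algebra_simps)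
  then show ?case using Suc first_window_add_period by simp
qed simp

lemma first_window_Suc_eq: "first_window (Suc t) = (t div N)*e + first_window (Suc (t mod N))"
proof -
  have "Suc t = (t div N)*N + Suc (t mod N)" by simp
  then have "first_window (Suc t) = first_window ((t div N)*N + Suc (t mod N))" by (rule arg_cong)
  also have "\<dots> = (t div N)*e + first_window (Suc (t mod N))" by (rule first_window_add_periods)
  finally show ?thesis .
qed

lemma point_add_period: "point (t + N) = point t + e*d"
proof -
  have "first_window (Suc (t + N)) - 1 = (first_window (Suc t) - 1) + e"
    using first_window_add_period[of "Suc t"] len_pos[of t] by simp
  then show ?thesis
    unfolding transversal_point_def using off_periodic[of t] by (simp add: add_mult_distrib)
qed

lemma point_less_period:
  assumes "t < N"
  shows "point t < e*d"
proof -
  have "first_window (Suc t) \<le> first_window N" using assms by (intro sum_mono2) auto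
  then have "first_window (Suc t) * d \<le> e * d"
    unfolding first_window_period by (rule mult_le_mono1)
  then show ?thesis using point_less_first_window_Suc[of t] by linarith
qed

lemma range_point_add_period: "v + e*d \<in> range point \<longleftrightarrow> v \<in> range point"
proof
  assume "v + e*d \<in> range point"
  then obtain t where t: "v + e*d = point t" by auto
  then have "N \<le> t" using point_less_period[of t] by (cases "t < N") auto
  then have "point t = point (t - N) + e*d" using point_add_period[of "t - N"] by simp
  then show "v \<in> range point" using t by auto
next
  assume "v \<in> range point"
  then obtain t where "v = point t" by auto
  then have "v + e*d = point (t + N)" using point_add_period by simp
  then show "v + e*d \<in> range point" by auto
qed

lemma card_points_below_period: "card {v \<in> {..<e*d}. v \<in> range point} = N"
proof -
  have "{v \<in> {..<e*d}. v \<in> range point} = point ` {..<N}"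
  proof safe
    fix t assume "point t < e*d"
    then have "t < N" using point_add_period[of "t - N"] by (cases "N \<le> t") auto
    then show "point t \<in> point ` {..<N}" by simp
  qed (auto intro: point_less_period)
  moreover have "inj point" using strict_mono_point by (rule strict_mono_imp_inj_on)
  ultimately show ?thesis by (simp add: card_image inj_on_subset[of point UNIV])
qed

lemma point_div: "point t div d = first_window (Suc t) - 1"
  and point_mod: "point t mod d = off t"
  unfolding transversal_point_def using off_less[of t] r_less by auto

lemma exists_window_colouring:
  assumes "d = k - l" "k \<le> e*d" "(k - 1) dvd (e*d - N)" "2 \<le> k"
  shows "\<exists>F. window_colouring k l e F \<and> card {v \<in> {..<e*d}. F v = 0} = N
    \<and> card {v \<in> {..<e*d}. F v = 1} = (e*d - N) div (k - 1)"
proof -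
  interpret C: partial_window_colouring "e*d" 1 k d "\<lambda>v. v \<in> range point" "\<lambda>v. 0"
  proof unfold_locales
    show "card {v \<in> {i*d..<i*d + k}. v \<in> range point \<and> 0 = a} = 1" if "a < 1" for i a :: nat
      using that card_window_points[of i] by simp
  qed (use assms range_point_add_period card_points_below_period in auto)
  have "window_colouring k l e C.colouring"
    using assms by (intro C.window_colouring) auto
  moreover have "card {v \<in> {..<e*d}. C.colouring v = 0} = N"
    using C.card_colour_special[of 0] card_points_below_period by simp
  moreover have "card {v \<in> {..<e*d}. C.colouring v = 1} = (e*d - N) div (k - 1)"
    using C.card_colour_free[of 0] card_points_below_period assms(4) by simp
  ultimately show ?thesis by blast
qed

end

locale two_periodic_transversals =
  Z1: periodic_transversal k d q r len1 off1 N1 e + Z2: periodic_transversal k d q r len2 off2 N2 e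
  for k d q r :: nat and len1 off1 :: "nat \<Rightarrow> nat" and N1 :: nat
    and len2 off2 :: "nat \<Rightarrow> nat" and N2 e :: nat +
  assumes disjoint:
    "range (transversal_point d len1 off1) \<inter> range (transversal_point d len2 off2) = {}"
begin

lemma card_points_below_period:
  "card {v \<in> {..<e*d}. v \<in> range Z1.point \<or> v \<in> range Z2.point} = N1 + N2"
proof -
  have "{v \<in> {..<e*d}. v \<in> range Z1.point \<or> v \<in> range Z2.point}
      = {v \<in> {..<e*d}. v \<in> range Z1.point} \<union> {v \<in> {..<e*d}. v \<in> range Z2.point}"
    by auto
  moreover have "card ({v \<in> {..<e*d}. v \<in> range Z1.point} \<union> {v \<in> {..<e*d}. v \<in> range Z2.point})
      = N1 + N2"
    using disjoint Z1.card_points_below_period Z2.card_points_below_period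
    by (subst card_Un_disjoint) auto
  ultimately show ?thesis by simp
qed

lemma card_window_label:
  fixes a :: nat
  assumes "a < 2"
  shows "card {v \<in> {i*d..<i*d + k}. (v \<in> range Z1.point \<or> v \<in> range Z2.point)
    \<and> (if v \<in> range Z1.point then 0 else 1) = a} = 1"
proof -
  consider "a = 0" | "a = 1" using assms by linarith
  then show ?thesis
  proof cases
    case 1
    then have "{v \<in> {i*d..<i*d + k}. (v \<in> range Z1.point \<or> v \<in> range Z2.point)
        \<and> (if v \<in> range Z1.point then 0 else 1) = a} = {v \<in> {i*d..<i*d + k}. v \<in> range Z1.point}"
      by auto
    then show ?thesis using Z1.card_window_points[of i] by (simp only:)
  next
    case 2
    then have "{v \<in> {i*d..<i*d + k}. (v \<in> range Z1.point \<or> v \<in> range Z2.point)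
        \<and> (if v \<in> range Z1.point then 0 else 1) = a} = {v \<in> {i*d..<i*d + k}. v \<in> range Z2.point}"
      using disjoint by auto
    then show ?thesis using Z2.card_window_points[of i] by (simp only:)
  qed
qed

lemma exists_window_colouring:
  assumes "d = k - l" "k \<le> e*d" "(k - 2) dvd (e*d - (N1 + N2))" "3 \<le> k"
  shows "\<exists>F. window_colouring k l e F \<and> card {v \<in> {..<e*d}. F v = 0} = N1
    \<and> card {v \<in> {..<e*d}. F v = 2} = (e*d - (N1 + N2)) div (k - 2)"
proof -
  interpret C: partial_window_colouring "e*d" 2 k d "\<lambda>v. v \<in> range Z1.point \<or> v \<in> range Z2.point"
    "\<lambda>v. if v \<in> range Z1.point then 0 else 1"
  proof unfold_locales
    show "card {v \<in> {i*d..<i*d + k}. (v \<in> range Z1.point \<or> v \<in> range Z2.point)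
        \<and> (if v \<in> range Z1.point then 0 else 1) = a} = 1" if "a < 2" for i a :: nat
      using that by (rule card_window_label)
  qed (use assms card_points_below_period Z1.range_point_add_period Z2.range_point_add_period in auto)
  have "window_colouring k l e C.colouring"
    using assms by (intro C.window_colouring) auto
  moreover have "card {v \<in> {..<e*d}. C.colouring v = 0} = N1"
  proof -
    have "{v \<in> {..<e*d}. (v \<in> range Z1.point \<or> v \<in> range Z2.point)
        \<and> (if v \<in> range Z1.point then 0 else 1) = (0::nat)} = {v \<in> {..<e*d}. v \<in> range Z1.point}"
      by auto
    then show ?thesis using C.card_colour_special[of 0] Z1.card_points_below_period by simp
  qed
  moreover have "card {v \<in> {..<e*d}. C.colouring v = 2} = (e*d - (N1 + N2)) div (k - 2)"
    using C.card_colour_free[of 0] card_points_below_period assms(4) by simp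
  ultimately show ?thesis by blast
qed

end

section \<open>Two periodic block patterns\<close>

lemma sum_long_first:
  "j \<le> N \<Longrightarrow> (\<Sum>u<j. if u mod N < a then Suc q else q) = j*q + min j a"
  by (induction j) auto

lemma sum_short_first:
  "j \<le> N \<Longrightarrow> (\<Sum>u<j. if u mod N < b then q else Suc q) = j*q + (j - b)"
  by (induction j) auto

lemma periodic_transversal_long_first:
  assumes "k = q*d + r" "0 < r" "r < d" "0 < q" "a \<le> N" "N*q + a = e"
    and "off_long < r" "r \<le> off_short" "off_short < d"
  shows "periodic_transversal k d q r (\<lambda>t. if t mod N < a then Suc q else q)
    (\<lambda>t. if t mod N < a then off_long else off_short) N e"
  using assms sum_long_first[of N N a q] by unfold_locales (auto split: if_splits)

lemma periodic_transversal_short_first: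
  assumes "k = q*d + r" "0 < r" "r < d" "0 < q" "b \<le> N" "N*q + (N - b) = e"
    and "off_long < r" "r \<le> off_short" "off_short < d"
  shows "periodic_transversal k d q r (\<lambda>t. if t mod N < b then q else Suc q)
    (\<lambda>t. if t mod N < b then off_short else off_long) N e"
  using assms sum_short_first[of N N b q] by unfold_locales (auto split: if_splits)

lemma add_mult_ne_add_mult:
  fixes A B e x y :: nat
  assumes "0 < x" "x < y" "y \<le> e"
  shows "A*e + x \<noteq> B*e + y"
proof (cases "A \<le> B")
  case True
  then have "A*e \<le> B*e" by (rule mult_le_mono1)
  then show ?thesis using assms by linarith
next
  case False
  then have "B*e + e \<le> A*e" using mult_le_mono1[of "Suc B" A e] by simp
  then show ?thesis using assms by linarith
qed

text \<open>The offsets \<open>{0, d - 1}\<close> and \<open>{r, r - 1}\<close> keep the two point sets apart modulo \<open>d\<close>,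
  except for long blocks when \<open>r = 1\<close>. Within a period of \<open>e\<close> windows the long blocks of the first
  pattern end by window \<open>a (q + 1) \<le> b q\<close>, those of the second start after window \<open>b q + q\<close>.\<close>
lemma disjoint_long_first_short_first:
  assumes "k = q*d + r" "0 < r" "r + 2 \<le> d" "0 < q"
    and "a \<le> N1" "N1*q + a = e" and "b \<le> N2" "0 < N2" "N2*q + (N2 - b) = e"
    and "r = 1 \<Longrightarrow> a * Suc q \<le> b * q"
  shows "range (transversal_point d (\<lambda>t. if t mod N1 < a then Suc q else q)
      (\<lambda>t. if t mod N1 < a then 0 else d - 1))
    \<inter> range (transversal_point d (\<lambda>t. if t mod N2 < b then q else Suc q)
      (\<lambda>t. if t mod N2 < b then r else r - 1)) = {}"
    (is "range ?z1 \<inter> range ?z2 = {}")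
proof -
  interpret Z1: periodic_transversal k d q r "\<lambda>t. if t mod N1 < a then Suc q else q"
    "\<lambda>t. if t mod N1 < a then 0 else d - 1" N1 e
    using assms by (intro periodic_transversal_long_first) auto
  interpret Z2: periodic_transversal k d q r "\<lambda>t. if t mod N2 < b then q else Suc q"
    "\<lambda>t. if t mod N2 < b then r else r - 1" N2 e
    using assms by (intro periodic_transversal_short_first) auto
  have "?z1 t \<noteq> ?z2 t'" for t t'
  proof
    assume eq: "?z1 t = ?z2 t'"
    define t0 where "t0 = t mod N1"
    define s0 where "s0 = t' mod N2"
    have "(if t0 < a then 0 else d - 1) = (if s0 < b then r else r - 1)"
      using Z1.point_mod[of t] Z2.point_mod[of t'] eq unfolding t0_def s0_def by simp
    then have long1: "t0 < a" and long2: "b \<le> s0" and r1: "r = 1"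
      using assms(2,3) unfolding t0_def s0_def by (auto split: if_splits)
    have "Z1.first_window (Suc t) - 1 = Z2.first_window (Suc t') - 1"
      using Z1.point_div[of t] Z2.point_div[of t'] eq by simp
    then have same: "Z1.first_window (Suc t) = Z2.first_window (Suc t')"
      using Z1.len_pos[of t] Z2.len_pos[of t'] by simp
    let ?x = "Suc t0 * Suc q" and ?y = "Suc s0 * q + (Suc s0 - b)"
    have "Z1.first_window (Suc t) = (t div N1) * e + Z1.first_window (Suc t0)"
      and "Z2.first_window (Suc t') = (t' div N2) * e + Z2.first_window (Suc s0)"
      unfolding t0_def s0_def by (rule Z1.first_window_Suc_eq Z2.first_window_Suc_eq)+
    moreover have "Z1.first_window (Suc t0) = ?x"
    proof -
      have "Z1.first_window (Suc t0) = Suc t0 * q + min (Suc t0) a"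
        by (rule sum_long_first) (use long1 assms(5) in simp)
      then show ?thesis using long1 by simp
    qed
    moreover have "Z2.first_window (Suc s0) = ?y"
      by (rule sum_short_first) (use assms(8) in \<open>simp add: s0_def Suc_le_eq\<close>)
    ultimately have "(t div N1) * e + ?x = (t' div N2) * e + ?y"
      using same by simp
    moreover have "?y \<le> e"
    proof -
      have "Suc s0 \<le> N2" using assms(8) unfolding s0_def by (simp add: Suc_le_eq)
      then have "Suc s0 * q \<le> N2 * q" "Suc s0 - b \<le> N2 - b" by (rule mult_le_mono1, simp)
      then show ?thesis using assms(9) by linarith
    qed
    moreover have "?x < ?y"
    proof -
      have "?x \<le> b * q"
        using long1 assms(10)[OF r1] mult_le_mono1[of "Suc t0" a "Suc q"] by simp
      moreover have "b * q < Suc s0 * q" by (rule mult_less_mono1) (use long2 assms(4) in simp_all)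
      ultimately show ?thesis by linarith
    qed
    ultimately show False using add_mult_ne_add_mult[of ?x ?y e] by simp
  qed
  then show ?thesis by auto
qed

section \<open>Cycles with \<open>k - l\<close> not dividing \<open>k\<close>\<close>

lemma exists_congruent_in_interval:
  fixes m N0 n :: nat
  assumes "0 < m"
  shows "\<exists>N. N0 \<le> N \<and> N < N0 + m \<and> N mod m = n mod m"
proof (intro exI conjI)
  let ?N = "N0 + (n + (m - 1)*N0) mod m"
  show "N0 \<le> ?N" "?N < N0 + m" using assms by simp_all
  have "?N mod m = (n + m*N0) mod m"
    using assms by (cases m) (simp_all add: mod_add_right_eq algebra_simps)
  then show "?N mod m = n mod m" by simp
qed

text \<open>Starting from \<open>\<lceil>e/(q+1)\<rceil>\<close>, reaching the residue of \<open>n\<close> modulo \<open>k - 1\<close> costs at most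
  \<open>k - 2\<close>, and \<open>e \<ge> k\<^sup>2 l \<ge> k q (q + 1)\<close> leaves room for that in \<open>q N \<le> e\<close>.\<close>
lemma exists_period_count:
  fixes q k l e n :: nat
  assumes q: "0 < q" and k3: "3 \<le> k" and kl: "q*(q+1) \<le> l*k" and e: "k*k*l \<le> e"
    and n: "e \<le> n"
  shows "\<exists>N. q*N \<le> e \<and> e \<le> (q+1)*N \<and> (k-1) dvd (n - N)"
proof -
  define N0 where "N0 = (e + q) div (q+1)"
  have "e + q = (q+1)*N0 + (e + q) mod (q+1)"
    unfolding N0_def by (rule mult_div_mod_eq[symmetric])
  moreover have "(e + q) mod (q+1) < q + 1" by simp
  ultimately have N0_lower: "e \<le> (q+1)*N0" and N0_upper: "(q+1)*N0 \<le> e + q" by linarith+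
  obtain N where N: "N0 \<le> N" "N < N0 + (k - 1)" "N mod (k-1) = n mod (k-1)"
    using exists_congruent_in_interval[of "k - 1" N0 n] k3 by auto
  have "e \<le> (q+1)*N" using N0_lower mult_le_mono2[OF N(1), of "q+1"] by linarith
  moreover have "q*N \<le> e"
  proof -
    have "q*q + q*(q+1)*(k-2) \<le> e"
    proof -
      have "k*(q*(q+1)) \<le> k*(l*k)" using kl by (rule mult_le_mono2)
      moreover obtain j where "k = j + 2" using k3 by (intro that[of "k - 2"]) simp
      then have "k*(q*(q+1)) = q*(q+1)*(k-2) + 2*(q*(q+1))" by (simp add: algebra_simps)
      ultimately show ?thesis using e by (simp add: algebra_simps)
    qed
    moreover have "q*((q+1)*N) \<le> q*((q+1)*N0) + q*(q+1)*(k-2)"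
      using N(2) mult_le_mono2[of N "N0 + (k-2)" "q*(q+1)"] by (simp add: algebra_simps)
    moreover have "q*((q+1)*N0) \<le> q*(e + q)" using N0_upper by (rule mult_le_mono2)
    ultimately have "(q+1)*(q*N) \<le> (q+1)*e" by (simp add: algebra_simps)
    then show ?thesis by (simp only: mult_le_cancel1)
  qed
  moreover have "(k-1) dvd (n - N)"
  proof -
    have "N \<le> q*N" using q by simp
    then have "N \<le> n" using \<open>q*N \<le> e\<close> n by linarith
    then show ?thesis using N(3) mod_eq_dvd_iff_nat[of N n "k - 1"] by simp
  qed
  ultimately show ?thesis by blast
qed

lemma cycle_size_eq:
  fixes q d r k l :: nat
  assumes "k = q*d + r" "r < d"
  shows "(k*k*l + q + 1)*d = k*(k*l*d + 1) + (d - r)"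
proof -
  have "(k*k*l + q + 1)*d + r = k*(k*l*d + 1) + d" using assms(1) by (simp add: algebra_simps)
  then show ?thesis using assms(2) by linarith
qed

lemma long_first_count_bounds:
  fixes q d r k l :: nat
  assumes "k = q*d + r" "0 < r" "r < d" "0 < q" "0 < l"
  shows "q*(k*l*d + 2) \<le> k*k*l + q + 1" "k*k*l + q + 1 \<le> (q+1)*(k*l*d + 2)"
proof -
  have "q*1 \<le> q*d" using assms by (intro mult_le_mono2) simp
  then have kq: "q \<le> k" using assms by linarith
  have "k*1*1 \<le> k*l*r" using assms by (intro mult_le_mono) auto
  then have "k \<le> k*l*r" by simp
  then have "q \<le> k*l*r" using kq by linarith
  moreover have "k*k*l = k*l*(q*d) + k*l*r" using assms(1) by (simp add: algebra_simps)
  ultimately show "q*(k*l*d + 2) \<le> k*k*l + q + 1" by (simp add: algebra_simps)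
  have "k \<le> (q+1)*d" using assms by (simp add: algebra_simps)
  then have "k*(k*l) \<le> (q+1)*d*(k*l)" by (rule mult_le_mono1)
  then show "k*k*l + q + 1 \<le> (q+1)*(k*l*d + 2)" by (simp add: algebra_simps)
qed

lemma short_first_count_bounds:
  fixes q d r k l :: nat
  assumes "k = q*d + r" "0 < r" "r < d" "0 < q" "0 < l"
  shows "q*(k*l*d + (d - r)) \<le> k*k*l + q + 1" "k*k*l + q + 1 \<le> (q+1)*(k*l*d + (d - r))"
proof -
  have f1: "q*(d-r) \<le> q*d" by (intro mult_le_mono2) simp
  have f2: "q*d \<le> k" using assms by simp
  have f3: "k*1*1 \<le> k*l*r" using assms by (intro mult_le_mono) auto
  have "q*(d-r) \<le> k*l*r" using f1 f2 f3 by linarith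
  moreover have "k*k*l = k*l*(q*d) + k*l*r" using assms(1) by (simp add: algebra_simps)
  ultimately show "q*(k*l*d + (d - r)) \<le> k*k*l + q + 1" by (simp add: algebra_simps)
  have "k \<le> (q+1)*d" using assms by (simp add: algebra_simps)
  then have "k*(k*l) \<le> (q+1)*d*(k*l)" by (rule mult_le_mono1)
  moreover have "(q+1)*1 \<le> (q+1)*(d-r)" using assms by (intro mult_le_mono2) simp
  ultimately show "k*k*l + q + 1 \<le> (q+1)*(k*l*d + (d - r))" by (simp add: algebra_simps)
qed

lemma long_first_before_short_first:
  fixes q d k l :: nat
  assumes "k = q*d + 1" "2 \<le> d - 1" "0 < q" "0 < l"
  shows "(k*k*l + q + 1 - q*(k*l*d + 2))*(q+1) \<le> ((q+1)*(k*l*d + (d - 1)) - (k*k*l + q + 1))*q"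
proof -
  define P where "P = k*l"
  have e: "k*k*l + q + 1 = P*q*d + P + q + 1" unfolding P_def using assms(1) by (simp add: algebra_simps)
  have qq: "q*(k*l*d + 2) = P*q*d + 2*q" unfolding P_def by (simp add: algebra_simps)
  have A: "k*k*l + q + 1 - q*(k*l*d + 2) \<le> P"
    unfolding e qq using assms(3) by linarith
  have B1: "(q+1)*(k*l*d + (d - 1)) = P*q*d + P*d + (q+1)*(d-1)" unfolding P_def by (simp add: algebra_simps)
  have pd: "P*d = P*(d-1) + P" using assms by (cases d) (auto simp: algebra_simps)
  have h: "q+1 \<le> (q+1)*(d-1)" using mult_le_mono2[of 1 "d-1" "q+1"] assms by simp
  have B: "P*(d-1) \<le> (q+1)*(k*l*d + (d - 1)) - (k*k*l + q + 1)"
    using B1 e pd h by linarith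
  have "P*(d-1)*q \<ge> P*2*q" using assms by (intro mult_le_mono1 mult_le_mono2) auto
  moreover have "P*(q+1) \<le> P*2*q" using assms by (simp add: algebra_simps)
  ultimately have "P*(q+1) \<le> P*(d-1)*q" by linarith
  moreover have "(k*k*l + q + 1 - q*(k*l*d + 2))*(q+1) \<le> P*(q+1)" using A by (rule mult_le_mono1)
  moreover have "P*(d-1)*q \<le> ((q+1)*(k*l*d + (d - 1)) - (k*k*l + q + 1))*q" using B by (rule mult_le_mono1)
  ultimately show ?thesis by linarith
qed

locale nondividing_cycle =
  fixes k l :: nat
  assumes l_pos: "0 < l" and l_less: "l < k" and not_dvd: "\<not> (k - l) dvd k"
begin

definition d :: nat where "d = k - l"

definition q :: nat where "q = k div d"

definition r :: nat where "r = k mod d"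

lemma k_eq: "k = q*d + r"
  unfolding q_def r_def by (rule div_mult_mod_eq[symmetric])

lemma r_pos: "0 < r"
  using not_dvd unfolding r_def d_def by (simp add: dvd_eq_mod_eq_0)

lemma d_ge_2: "2 \<le> d"
  using l_less not_dvd unfolding d_def by (cases "k - l = 1") auto

lemma r_less: "r < d"
  using d_ge_2 unfolding r_def by simp

lemma q_pos: "0 < q"
proof (rule ccontr)
  assume "\<not> 0 < q"
  then have "k = r" using k_eq by simp
  then show False using r_less l_pos unfolding d_def by simp
qed

lemma k_ge_3: "3 \<le> k"
proof -
  have "1*2 \<le> q*d" using q_pos d_ge_2 by (intro mult_le_mono) simp_all
  then show ?thesis using k_eq r_pos by linarith
qed

lemma l_eq: "l = (q - 1)*d + r"
proof -
  have "l = k - d" using l_less unfolding d_def by simp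
  then show ?thesis using k_eq q_pos by (cases q) auto
qed

lemma ceiling_eq: "\<lceil>real k / real d\<rceil> = int q + 1"
proof (rule ceiling_unique)
  have d0: "0 < real d" using d_ge_2 by simp
  have "q*d < k" using k_eq r_pos by linarith
  then have "real (q*d) < real k" by (simp only: of_nat_less_iff)
  then show "real_of_int (int q + 1) - 1 < real k / real d" using d0 by (simp add: field_simps)
  have "k \<le> q*d + d" using k_eq r_less by linarith
  then have "real k \<le> real (q*d + d)" by (simp only: of_nat_le_iff)
  then have "real k \<le> (real q + 1) * real d" by (simp add: algebra_simps)
  then show "real k / real d \<le> real_of_int (int q + 1)" using d0 by (simp add: field_simps)
qed

lemma q_Suc_q_le: "q * (q + 1) \<le> l * k"
proof -
  have "q*1 \<le> q*d" using d_ge_2 by (intro mult_le_mono2) simp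
  then have k: "q + 1 \<le> k" using k_eq r_pos by linarith
  obtain q' where q': "q = Suc q'" using q_pos by (cases q) auto
  have "q'*1 \<le> q'*d" using d_ge_2 by (intro mult_le_mono2) simp
  moreover have "l = q'*d + r" using l_eq q' by simp
  ultimately have "q \<le> l" using q' r_pos by linarith
  with k show ?thesis using mult_le_mono[of q l "q + 1" k] by simp
qed

lemma k_le_cycle_size:
  assumes "k*k*l \<le> e"
  shows "k \<le> e*d"
proof -
  have "k*1*1 \<le> k*k*l" using l_pos l_less by (intro mult_le_mono) simp_all
  moreover have "e*1 \<le> e*d" using d_ge_2 by (intro mult_le_mono2) simp
  ultimately show ?thesis using assms by linarith
qed

lemma k_partite_if_large:
  assumes "k*k*l \<le> e"
  shows "k_partite (cycle_vertices k l e) (cycle_edges k l e) k"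
proof -
  have "e \<le> e*d" using d_ge_2 mult_le_mono2[of 1 d e] by simp
  then obtain N where N: "q*N \<le> e" "e \<le> (q + 1)*N" "(k - 1) dvd (e*d - N)"
    using exists_period_count[OF q_pos k_ge_3 q_Suc_q_le assms] by blast
  interpret periodic_transversal k d q r "\<lambda>t. if t mod N < e - q*N then Suc q else q"
    "\<lambda>t. if t mod N < e - q*N then 0 else d - 1" N e
    using N k_eq r_pos r_less q_pos by (intro periodic_transversal_long_first) auto
  have "\<exists>F. window_colouring k l e F \<and> card {v \<in> {..<e*d}. F v = 0} = N
      \<and> card {v \<in> {..<e*d}. F v = 1} = (e*d - N) div (k - 1)"
    using d_def k_le_cycle_size[OF assms] N(3) k_ge_3 by (intro exists_window_colouring) simp_all
  then obtain F where "window_colouring k l e F" by blast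
  then show ?thesis by (rule window_colouring.k_partite)
qed

lemma hgcd_eq_1_if_gap_1:
  assumes e: "e = k*k*l + q + 1" and gap: "d = r + 1"
  shows "hgcd (cycle_vertices k l e) (cycle_edges k l e) = 1"
proof -
  define T where "T = k*l*d + 1"
  have free: "e*d - Suc T = (k - 1)*T"
  proof -
    have "e*d = k*T + 1"
      using cycle_size_eq[OF k_eq r_less, of l] gap unfolding e T_def by simp
    then show ?thesis by (cases k) (auto simp: algebra_simps)
  qed
  have "q * Suc T \<le> e" "e \<le> (q + 1) * Suc T"
    using long_first_count_bounds[OF k_eq r_pos r_less q_pos l_pos] unfolding e T_def by simp_all
  then interpret periodic_transversal k d q r "\<lambda>t. if t mod Suc T < e - q * Suc T then Suc q else q"
    "\<lambda>t. if t mod Suc T < e - q * Suc T then 0 else d - 1" "Suc T" e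
    using k_eq r_pos r_less q_pos by (intro periodic_transversal_long_first) auto
  have "\<exists>F. window_colouring k l e F \<and> card {v \<in> {..<e*d}. F v = 0} = Suc T
      \<and> card {v \<in> {..<e*d}. F v = 1} = (e*d - Suc T) div (k - 1)"
    using d_def k_le_cycle_size[of e] e free k_ge_3 by (intro exists_window_colouring) simp_all
  then obtain F where F: "window_colouring k l e F" "card {v \<in> {..<e*d}. F v = 0} = Suc T"
    "card {v \<in> {..<e*d}. F v = 1} = (e*d - Suc T) div (k - 1)"
    by blast
  show ?thesis
    using window_colouring.hgcd_eq_1[OF F(1), of 1] F(2,3) free k_ge_3 unfolding d_def by simp
qed

lemma hgcd_eq_1_if_gap_ge_2:
  assumes e: "e = k*k*l + q + 1" and gap: "r + 2 \<le> d"
  shows "hgcd (cycle_vertices k l e) (cycle_edges k l e) = 1"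
proof -
  define T where "T = k*l*d + 1"
  define N2 where "N2 = k*l*d + (d - r)"
  define a where "a = e - q * Suc T"
  define b where "b = (q + 1)*N2 - e"
  have free: "e*d - (Suc T + N2) = (k - 2)*T"
  proof -
    have "e*d = k*T + (d - r)"
      using cycle_size_eq[OF k_eq r_less, of l] unfolding e T_def by simp
    then show ?thesis unfolding N2_def T_def using k_ge_3 gap by (cases k) (auto simp: algebra_simps)
  qed
  have bounds1: "q * Suc T \<le> e" "e \<le> (q + 1) * Suc T"
    using long_first_count_bounds[OF k_eq r_pos r_less q_pos l_pos] unfolding e T_def by simp_all
  have bounds2: "q * N2 \<le> e" "e \<le> (q + 1) * N2"
    using short_first_count_bounds[OF k_eq r_pos r_less q_pos l_pos] unfolding e N2_def by simp_all
  have "a * Suc q \<le> b * q" if "r = 1"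
    using long_first_before_short_first[of k q d l] k_eq that gap q_pos l_pos
    unfolding a_def b_def e N2_def T_def by simp
  then have "two_periodic_transversals k d q r
      (\<lambda>t. if t mod Suc T < a then Suc q else q) (\<lambda>t. if t mod Suc T < a then 0 else d - 1) (Suc T)
      (\<lambda>t. if t mod N2 < b then q else Suc q) (\<lambda>t. if t mod N2 < b then r else r - 1) N2 e"
    using bounds1 bounds2 gap k_eq r_pos r_less q_pos unfolding a_def b_def N2_def
    by (intro two_periodic_transversals.intro two_periodic_transversals_axioms.intro
        periodic_transversal_long_first periodic_transversal_short_first
        disjoint_long_first_short_first) auto
  then have "\<exists>G. window_colouring k l e G \<and> card {v \<in> {..<e*d}. G v = 0} = Suc T
      \<and> card {v \<in> {..<e*d}. G v = 2} = (e*d - (Suc T + N2)) div (k - 2)"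
    using d_def k_le_cycle_size[of e] e free k_ge_3
    by (intro two_periodic_transversals.exists_window_colouring) simp_all
  then obtain G where G: "window_colouring k l e G" "card {v \<in> {..<e*d}. G v = 0} = Suc T"
    "card {v \<in> {..<e*d}. G v = 2} = (e*d - (Suc T + N2)) div (k - 2)"
    by blast
  show ?thesis
    using window_colouring.hgcd_eq_1[OF G(1), of 2] G(2,3) free k_ge_3 unfolding d_def by simp
qed

lemma hgcd_eq_1:
  assumes "e = k*k*l + q + 1"
  shows "hgcd (cycle_vertices k l e) (cycle_edges k l e) = 1"
  using hgcd_eq_1_if_gap_1[OF assms] hgcd_eq_1_if_gap_ge_2[OF assms] r_less
  by (cases "d = r + 1") auto

end

theorem lemma5p3:
  fixes k l m :: nat
  assumes "1 \<le> l" and "l \<le> k - 1" and "\<not> (k - l) dvd k"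
    and "int m \<ge> \<lceil>real k / real (k - l)\<rceil>"
  shows "k_partite (cycle_vertices k l (k^2 * l + m)) (cycle_edges k l (k^2 * l + m)) k
       \<and> (int m = \<lceil>real k / real (k - l)\<rceil> \<longrightarrow>
            hgcd (cycle_vertices k l (k^2 * l + m)) (cycle_edges k l (k^2 * l + m)) = 1)"
proof -
  interpret nondividing_cycle k l
    using assms(1-3) by unfold_locales auto
  have "k*k*l \<le> k^2 * l + m" by (simp add: power2_eq_square)
  moreover have "k^2 * l + m = k*k*l + q + 1" if "int m = \<lceil>real k / real (k - l)\<rceil>"
    using that ceiling_eq unfolding d_def by (simp add: power2_eq_square)
  ultimately show ?thesis using k_partite_if_large hgcd_eq_1 by simp
qed

end
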